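(* Let $\Pi_n=\{\pi_1,\ldots,\pi_n\}$ be a finite set of policies of a discrete mean-field game (setting in the context). Consider the protocol: for $t=1,\ldots,T$, a learner chooses $\nu_t\in\Delta(\Pi_n)$ based on the past reward functions $R_1,\ldots,R_{t-1}$, then observes the linear reward function $R_t(\nu)=\mathbb E_{\pi\sim\nu}[J(\pi,\mu(\nu_t))]$ on $\Delta(\Pi_n)$ and receives $R_t(\nu_t)$. Let $\rho=\frac1T\sum_{t=1}^T\delta_{\nu_t}$. (i) If the learner has external regret $\max_{\nu\in\Delta(\Pi_n)}\sum_{t=1}^TR_t(\nu)-\sum_{t=1}^TR_t(\nu_t)=O(\sqrt T)$, then $\rho$ is an $O(1/\sqrt T)$-mean-field coarse correlated equilibrium of the restricted game, i.e. $\max_{i}\mathbb E_{\nu\sim\rho}\big[J(\pi_i,\mu(\nu))-\mathbb E_{\pi\sim\nu}J(\pi,\mu(\nu))\big]=O(1/\sqrt T)$. (ii) If the learner has internal regret $\max_{i,j}\sum_{t=1}^T\nu_t(\pi_i)\big(J(\pi_j,\mu(\nu_t))-J(\pi_i,\mu(\nu_t))\big)=O(\sqrt T)$, then $\rho$ is an $O(1/\sqrt T)$-mean-field correlated equilibrium of the restricted game, i.e. $\max_{i,j}\mathbb E_{\nu\sim\rho}\big[\nu(\pi_i)\big(J(\pi_j,\mu(\nu))-J(\pi_i,\mu(\nu))\big)\big]=O(1/\sqrt T)$.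
   Context: A discrete mean-field game consists of a finite state set $\mathcal X$, a finite action set $\mathcal A$, a reward $r:\mathcal X\times\mathcal A\times\Delta(\mathcal X)\to\mathbb R$, transition probabilities $p(x'\mid x,a)$ not depending on the population distribution, and an initial distribution $\mu_0\in\Delta(\mathcal X)$. A policy is $\pi:\mathcal X\to\Delta(\mathcal A)$; $\mu^\pi$ is its state occupancy measure (either $\gamma$-discounted or finite-horizon with time in the state), and $J(\pi,\mu)=\sum_{x,a}\mu^\pi(x)\pi(x,a)r(x,a,\mu)$ is the expected payoff. For $\nu\in\Delta(\Pi_n)$, $\mu(\nu)=\sum_\pi\nu(\pi)\mu^\pi$. A correlation device is a distribution $\rho$ over $\Delta(\Pi_n)$ (here finitely supported). *)

theory Defs
  imports "HOL-Probability.Probability" "HOL-Library.Landau_Symbols"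
begin

text \<open>A population distribution / occupancy measure is a function 'x \<Rightarrow> real,
  a policy is pol :: 'x \<Rightarrow> 'a \<Rightarrow> real (pol x a = probability of action a in state x),
  transitions p x a y = p(y | x, a), rewards r x a mu.\<close>

definition is_dist :: "('b::finite \<Rightarrow> real) \<Rightarrow> bool" where
  "is_dist f \<longleftrightarrow> (\<forall>b. 0 \<le> f b) \<and> (\<Sum>b\<in>UNIV. f b) = 1"

definition is_policy :: "('x::finite \<Rightarrow> 'a::finite \<Rightarrow> real) \<Rightarrow> bool" where
  "is_policy pol \<longleftrightarrow> (\<forall>x. is_dist (pol x))"

definition is_transition :: "('x::finite \<Rightarrow> 'a::finite \<Rightarrow> 'x \<Rightarrow> real) \<Rightarrow> bool" where
  "is_transition p \<longleftrightarrow> (\<forall>x a. is_dist (p x a))"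

primrec sdist :: "('x::finite \<Rightarrow> 'a::finite \<Rightarrow> 'x \<Rightarrow> real) \<Rightarrow> ('x \<Rightarrow> real)
    \<Rightarrow> ('x \<Rightarrow> 'a \<Rightarrow> real) \<Rightarrow> nat \<Rightarrow> 'x \<Rightarrow> real" where
  "sdist p mu0 pol 0 = mu0"
| "sdist p mu0 pol (Suc t) =
     (\<lambda>y. \<Sum>x\<in>UNIV. \<Sum>a\<in>UNIV. sdist p mu0 pol t x * pol x a * p x a y)"

definition occ :: "real \<Rightarrow> ('x::finite \<Rightarrow> 'a::finite \<Rightarrow> 'x \<Rightarrow> real) \<Rightarrow> ('x \<Rightarrow> real)
    \<Rightarrow> ('x \<Rightarrow> 'a \<Rightarrow> real) \<Rightarrow> 'x \<Rightarrow> real" where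
  "occ gamma p mu0 pol x = (1 - gamma) * (\<Sum>t. gamma ^ t * sdist p mu0 pol t x)"

definition Jpay :: "('x::finite \<Rightarrow> 'a::finite \<Rightarrow> ('x \<Rightarrow> real) \<Rightarrow> real) \<Rightarrow> real
    \<Rightarrow> ('x \<Rightarrow> 'a \<Rightarrow> 'x \<Rightarrow> real) \<Rightarrow> ('x \<Rightarrow> real)
    \<Rightarrow> ('x \<Rightarrow> 'a \<Rightarrow> real) \<Rightarrow> ('x \<Rightarrow> real) \<Rightarrow> real" where
  "Jpay r gamma p mu0 pol mu =
     (\<Sum>x\<in>UNIV. \<Sum>a\<in>UNIV. occ gamma p mu0 pol x * pol x a * r x a mu)"

text \<open>The restricted policy set Pi_n is given by an enumeration Pol of a finite index type 'p;
  nu :: 'p \<Rightarrow> real is an element of Delta(Pi_n).  mu(nu) = sum_pi nu(pol) mu^pol.\<close>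
definition mix :: "real \<Rightarrow> ('x::finite \<Rightarrow> 'a::finite \<Rightarrow> 'x \<Rightarrow> real) \<Rightarrow> ('x \<Rightarrow> real)
    \<Rightarrow> ('p::finite \<Rightarrow> 'x \<Rightarrow> 'a \<Rightarrow> real) \<Rightarrow> ('p \<Rightarrow> real) \<Rightarrow> 'x \<Rightarrow> real" where
  "mix gamma p mu0 Pol nu = (\<lambda>x. \<Sum>i\<in>UNIV. nu i * occ gamma p mu0 (Pol i) x)"

definition payoff where
  "payoff r gamma p mu0 Pol i nu = Jpay r gamma p mu0 (Pol i) (mix gamma p mu0 Pol nu)"

definition reward_fn where
  "reward_fn r gamma p mu0 Pol nut = (\<lambda>nu. \<Sum>i\<in>UNIV. nu i * payoff r gamma p mu0 Pol i nut)"

text \<open>A learner maps the list of past reward functions to an element of Delta(Pi_n).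
  hist t = [R_1, ..., R_t]; the play at round t+1 is L (hist t) (rounds indexed from 0).\<close>
primrec hist where
  "hist r gamma p mu0 Pol L 0 = []"
| "hist r gamma p mu0 Pol L (Suc t) =
     hist r gamma p mu0 Pol L t @ [reward_fn r gamma p mu0 Pol (L (hist r gamma p mu0 Pol L t))]"

definition play where
  "play r gamma p mu0 Pol L t = L (hist r gamma p mu0 Pol L t)"

definition Delta_set :: "('p::finite \<Rightarrow> real) set" where
  "Delta_set = {nu. is_dist nu}"

definition ext_regret where
  "ext_regret r gamma p mu0 Pol L T =
     (SUP nu\<in>Delta_set. \<Sum>t<T. reward_fn r gamma p mu0 Pol (play r gamma p mu0 Pol L t) nu)
     - (\<Sum>t<T. reward_fn r gamma p mu0 Pol (play r gamma p mu0 Pol L t) (play r gamma p mu0 Pol L t))"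

definition int_regret where
  "int_regret r gamma p mu0 Pol L T =
     Max ((\<lambda>(i, j). \<Sum>t<T. play r gamma p mu0 Pol L t i *
        (payoff r gamma p mu0 Pol j (play r gamma p mu0 Pol L t)
         - payoff r gamma p mu0 Pol i (play r gamma p mu0 Pol L t))) ` UNIV)"

definition rho where
  "rho r gamma p mu0 Pol L T = pmf_of_multiset (mset (map (play r gamma p mu0 Pol L) [0..<T]))"

definition cce_gap where
  "cce_gap r gamma p mu0 Pol (R :: ('p::finite \<Rightarrow> real) pmf) =
     Max ((\<lambda>i. measure_pmf.expectation R (\<lambda>nu.
        payoff r gamma p mu0 Pol i nu - (\<Sum>j\<in>UNIV. nu j * payoff r gamma p mu0 Pol j nu))) ` UNIV)"

definition ce_gap where
  "ce_gap r gamma p mu0 Pol (R :: ('p::finite \<Rightarrow> real) pmf) =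
     Max ((\<lambda>(i, j). measure_pmf.expectation R (\<lambda>nu.
        nu i * (payoff r gamma p mu0 Pol j nu - payoff r gamma p mu0 Pol i nu))) ` UNIV)"

end

theory Submission imports Defs begin

text \<open>The empirical device \<open>\<rho>\<^sub>T\<close> is the uniform distribution over the rounds, so
  each of its gaps is a maximum of averages over rounds. Both maxima are exactly the
  corresponding regret divided by \<open>T\<close>; for the external regret this is because a linear
  function on the simplex attains its supremum at a vertex. An \<open>O(\<surd>T)\<close> regret therefore gives an
  \<open>O(1/\<surd>T)\<close> gap. The identity is purely algebraic: no hypothesis on the game is needed.\<close>

lemma expectation_pmf_of_multiset_map_upt:
  fixes nu :: "nat \<Rightarrow> 'b" and f :: "'b \<Rightarrow> real"
  assumes "T > 0"
  shows "measure_pmf.expectation (pmf_of_multiset (mset (map nu [0..<T]))) f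
           = (\<Sum>t<T. f (nu t)) / T"
proof -
  have "{..<T} \<noteq> {}"
    using assms by auto
  then have "pmf_of_multiset (mset (map nu [0..<T])) = map_pmf nu (pmf_of_set {..<T})"
    by (simp add: map_pmf_of_set atLeast0LessThan)
  then show ?thesis
    using \<open>{..<T} \<noteq> {}\<close> by (simp add: integral_pmf_of_set)
qed

lemma SUP_Delta_set_linear:
  fixes c :: "'p::finite \<Rightarrow> real"
  shows "(SUP v\<in>Delta_set. \<Sum>i\<in>UNIV. v i * c i) = Max (range c)"
proof (rule cSup_eq_maximum)
  have "Max (range c) \<in> range c"
    by (rule Max_in) auto
  then obtain k where k: "c k = Max (range c)"
    by (metis rangeE)
  define e where "e = (\<lambda>j. of_bool (j = k) :: real)"
  have "e \<in> Delta_set"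
    by (simp add: e_def Delta_set_def is_dist_def)
  moreover have "(\<Sum>i\<in>UNIV. e i * c i) = Max (range c)"
    using k by (simp add: e_def)
  ultimately show "Max (range c) \<in> (\<lambda>v. \<Sum>i\<in>UNIV. v i * c i) ` Delta_set"
    by (metis (no_types, lifting) image_eqI)
next
  fix x assume "x \<in> (\<lambda>v. \<Sum>i\<in>UNIV. v i * c i) ` Delta_set"
  then obtain v where v: "is_dist v" and x: "x = (\<Sum>i\<in>UNIV. v i * c i)"
    by (auto simp: Delta_set_def)
  have "x \<le> (\<Sum>i\<in>UNIV. v i * Max (range c))"
    unfolding x using v by (intro sum_mono mult_left_mono) (auto simp: is_dist_def)
  also have "\<dots> = Max (range c)"
    using v by (simp add: is_dist_def flip: sum_distrib_right)
  finally show "x \<le> Max (range c)" .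
qed

lemma Max_range_mono_commute:
  fixes c :: "'q::finite \<Rightarrow> 'b::linorder"
  assumes "mono h"
  shows "Max (range (\<lambda>i. h (c i))) = h (Max (range c))"
  using mono_Max_commute[OF assms, of "range c"] by (simp add: image_image)

lemma bigo_divide_by_horizon:
  fixes f g :: "nat \<Rightarrow> real"
  assumes "f \<in> O(\<lambda>T. sqrt (real T))" and "\<And>T. T > 0 \<Longrightarrow> g T = f T / T"
  shows "g \<in> O(\<lambda>T. 1 / sqrt (real T))"
proof -
  have "(\<lambda>T. f T / real T) \<in> O(\<lambda>T. sqrt (real T) / real T)"
    using assms(1) eventually_gt_at_top[of 0]
    by (intro landau_o.big.divide_right) (auto elim: eventually_mono)
  moreover have "(\<lambda>T. sqrt (real T) / real T) = (\<lambda>T. 1 / sqrt (real T))"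
    by (simp add: sqrt_divide_self_eq inverse_eq_divide)
  moreover have "\<forall>\<^sub>F T in at_top. f T / real T = g T"
    using eventually_gt_at_top[of 0] by eventually_elim (simp add: assms(2))
  ultimately show ?thesis
    using landau_o.big.in_cong by metis
qed

lemma cce_gap_rho_eq_ext_regret:
  assumes "T > 0"
  shows "cce_gap r gamma p mu0 Pol (rho r gamma p mu0 Pol L T) = ext_regret r gamma p mu0 Pol L T / T"
proof -
  define nu where "nu = play r gamma p mu0 Pol L"
  define P where "P = (\<lambda>i v. payoff r gamma p mu0 Pol i v)"
  define c where "c = (\<lambda>i. \<Sum>t<T. P i (nu t))"
  define S where "S = (\<Sum>t<T. \<Sum>j\<in>UNIV. nu t j * P j (nu t))"
  have cumulative_reward: "(\<Sum>t<T. reward_fn r gamma p mu0 Pol (nu t) v) = (\<Sum>i\<in>UNIV. v i * c i)" for v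
    unfolding reward_fn_def c_def P_def by (simp add: sum_distrib_left sum.swap[of _ "{..<T}"])
  have "ext_regret r gamma p mu0 Pol L T = Max (range c) - S"
    unfolding ext_regret_def nu_def[symmetric] cumulative_reward SUP_Delta_set_linear
    by (simp add: S_def reward_fn_def P_def)
  moreover have "cce_gap r gamma p mu0 Pol (rho r gamma p mu0 Pol L T) = Max (range (\<lambda>i. (c i - S) / T))"
    unfolding cce_gap_def rho_def nu_def[symmetric] expectation_pmf_of_multiset_map_upt[OF assms]
      P_def[symmetric]
    by (simp add: c_def S_def sum_subtractf)
  moreover have "mono (\<lambda>x. (x - S) / real T)"
    using assms by (auto simp: mono_def divide_right_mono)
  ultimately show ?thesis
    using Max_range_mono_commute[of "\<lambda>x. (x - S) / T" c] by simp
qed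

lemma ce_gap_rho_eq_int_regret:
  assumes "T > 0"
  shows "ce_gap r gamma p mu0 Pol (rho r gamma p mu0 Pol L T) = int_regret r gamma p mu0 Pol L T / T"
proof -
  define nu where "nu = play r gamma p mu0 Pol L"
  define P where "P = (\<lambda>i v. payoff r gamma p mu0 Pol i v)"
  define g where "g = (\<lambda>(i, j). \<Sum>t<T. nu t i * (P j (nu t) - P i (nu t)))"
  have "ce_gap r gamma p mu0 Pol (rho r gamma p mu0 Pol L T) = Max (range (\<lambda>q. g q / T))"
    unfolding ce_gap_def rho_def nu_def[symmetric] expectation_pmf_of_multiset_map_upt[OF assms]
      P_def[symmetric] g_def
    by (simp add: case_prod_beta)
  moreover have "int_regret r gamma p mu0 Pol L T = Max (range g)"
    unfolding int_regret_def g_def nu_def P_def by simp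
  moreover have "mono (\<lambda>x. x / real T)"
    using assms by (auto simp: mono_def divide_right_mono)
  ultimately show ?thesis
    using Max_range_mono_commute[of "\<lambda>x. x / T" g] by simp
qed

theorem mainTheorem4:
  fixes r :: "'x::finite \<Rightarrow> 'a::finite \<Rightarrow> ('x \<Rightarrow> real) \<Rightarrow> real"
    and p :: "'x \<Rightarrow> 'a \<Rightarrow> 'x \<Rightarrow> real"
    and mu0 :: "'x \<Rightarrow> real"
    and gamma :: real
    and Pol :: "'p::finite \<Rightarrow> 'x \<Rightarrow> 'a \<Rightarrow> real"
    and L :: "(('p \<Rightarrow> real) \<Rightarrow> real) list \<Rightarrow> ('p \<Rightarrow> real)"
  assumes "0 \<le> gamma" and "gamma < 1"
    and "is_transition p"
    and "is_dist mu0"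
    and "\<forall>i. is_policy (Pol i)"
    and "\<forall>h. is_dist (L h)"
  shows
    "((\<lambda>T. ext_regret r gamma p mu0 Pol L T) \<in> O(\<lambda>T. sqrt (real T))
        \<longrightarrow> (\<lambda>T. cce_gap r gamma p mu0 Pol (rho r gamma p mu0 Pol L T)) \<in> O(\<lambda>T. 1 / sqrt (real T)))
     \<and> ((\<lambda>T. int_regret r gamma p mu0 Pol L T) \<in> O(\<lambda>T. sqrt (real T))
        \<longrightarrow> (\<lambda>T. ce_gap r gamma p mu0 Pol (rho r gamma p mu0 Pol L T)) \<in> O(\<lambda>T. 1 / sqrt (real T)))"
proof (intro conjI impI)
  assume "(\<lambda>T. ext_regret r gamma p mu0 Pol L T) \<in> O(\<lambda>T. sqrt (real T))"
  then show "(\<lambda>T. cce_gap r gamma p mu0 Pol (rho r gamma p mu0 Pol L T)) \<in> O(\<lambda>T. 1 / sqrt (real T))"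
    by (rule bigo_divide_by_horizon) (rule cce_gap_rho_eq_ext_regret)
next
  assume "(\<lambda>T. int_regret r gamma p mu0 Pol L T) \<in> O(\<lambda>T. sqrt (real T))"
  then show "(\<lambda>T. ce_gap r gamma p mu0 Pol (rho r gamma p mu0 Pol L T)) \<in> O(\<lambda>T. 1 / sqrt (real T))"
    by (rule bigo_divide_by_horizon) (rule ce_gap_rho_eq_int_regret)
qed

end
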